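(* Consider binary node classification with classes $\{0,1\}$, and let $k\in\{0,1\}$. Let $c_0,c_1\in(0,1)$ be the class homophily parameters, and assume the classes are balanced, i.e. $P(\hat{Y}=0)=P(\hat{Y}=1)$, and the graph is homophilic, i.e. $c_k > 1-c_{1-k}$. Then for any node $i$ with neighborhood $\mathcal{N}(i)$ and observed neighbor labels $\{Y_j=y_j\}_{j\in\mathcal{N}(i)}$, $$P\big(\hat{Y}_i = k \mid \{Y_j=y_j\}_{j\in\mathcal{N}(i)}\big) > 0.5$$ if and only if $$|\mathcal{N}_k(i)| > |\mathcal{N}_{1-k}(i)| \cdot \frac{\log c_{1-k} - \log (1 - c_k)}{\log c_k - \log (1 - c_{1-k})}.$$
   Context: Model: each node $i$ has a (latent/soft) class $\hat{Y}_i\in\{0,1\}$, and each neighbor $j\in\mathcal{N}(i)$ has an observed label $Y_j\in\{0,1\}$. Given $\hat{Y}_i$, the neighbor labels are conditionally independent with $P(Y_j=k\mid \hat{Y}_i=k)=c_k$ and $P(Y_j=1-k\mid\hat{Y}_i=k)=1-c_k$ for $k\in\{0,1\}$ ($c_k$ is called the class homophily of class $k$). The posterior is obtained by Bayes' rule: $P(\hat Y_i=k\mid\{Y_j=y_j\}_{j\in\mathcal N(i)})\propto P(\hat Y_i=k)\prod_{j\in\mathcal N(i)}P(Y_j=y_j\mid \hat Y_i=k)$. Notation: $\mathcal{N}_k(i)=\{j\in\mathcal{N}(i): y_j=k\}$ is the set of neighbors of $i$ with label $k$, and $\mathcal{N}_{1-k}(i)=\{j\in\mathcal{N}(i): y_j=1-k\}$.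 *)

theory Defs
  imports Complex_Main
begin

text \<open>Classes are the naturals 0 and 1. c k is the class homophily of class k.
  P(Y_j = yj | Yhat_i = k) = c k if yj = k, and 1 - c k otherwise.\<close>
definition nbr_lik :: "(nat \<Rightarrow> real) \<Rightarrow> nat \<Rightarrow> nat \<Rightarrow> real" where
  "nbr_lik c k yj = (if yj = k then c k else 1 - c k)"

text \<open>Joint likelihood of the observed neighbour labels given Yhat_i = k
  (conditional independence).\<close>
definition likelihood :: "(nat \<Rightarrow> real) \<Rightarrow> 'a set \<Rightarrow> ('a \<Rightarrow> nat) \<Rightarrow> nat \<Rightarrow> real" where
  "likelihood c N y k = (\<Prod>j\<in>N. nbr_lik c k (y j))"

definition posterior :: "(nat \<Rightarrow> real) \<Rightarrow> (nat \<Rightarrow> real) \<Rightarrow> 'a set \<Rightarrow> ('a \<Rightarrow> nat) \<Rightarrow> nat \<Rightarrow> real" where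
  "posterior pr c N y k =
     pr k * likelihood c N y k / (\<Sum>m\<in>{0,1}. pr m * likelihood c N y m)"

definition nbrs_with :: "'a set \<Rightarrow> ('a \<Rightarrow> nat) \<Rightarrow> nat \<Rightarrow> 'a set" where
  "nbrs_with N y k = {j\<in>N. y j = k}"

end

theory Submission
  imports Defs
begin

text \<open>With balanced priors the posterior of class k exceeds 1/2 exactly when the likelihood
  of k exceeds that of the other class. Grouping the neighbours by label, the likelihood of
  class m is a product of two powers with exponents the label counts, so comparing the two
  likelihoods after taking logarithms is a linear inequality in the counts; homophily makes
  the coefficient of the count of k positive, and dividing by it gives the threshold.\<close>

lemma likelihood_pos:
  assumes "0 < c m" "c m < 1"
  shows "likelihood c N y m > 0"
  unfolding likelihood_def nbr_lik_def using assms by (intro prod_pos) auto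

lemma likelihood_two_labels:
  assumes "finite N" "\<forall>j\<in>N. y j \<in> {k, k'}" "k \<noteq> k'"
  shows "likelihood c N y m =
    nbr_lik c m k ^ card (nbrs_with N y k) * nbr_lik c m k' ^ card (nbrs_with N y k')"
proof -
  have split: "N = nbrs_with N y k \<union> nbrs_with N y k'"
    using assms(2) by (auto simp: nbrs_with_def)
  have disjoint: "nbrs_with N y k \<inter> nbrs_with N y k' = {}"
    using assms(3) by (auto simp: nbrs_with_def)
  have finite: "finite (nbrs_with N y k)" "finite (nbrs_with N y k')"
    using assms(1) by (auto simp: nbrs_with_def)
  have "likelihood c N y m =
      (\<Prod>j\<in>nbrs_with N y k. nbr_lik c m (y j)) * (\<Prod>j\<in>nbrs_with N y k'. nbr_lik c m (y j))"
    unfolding likelihood_def by (subst split, rule prod.union_disjoint[OF finite disjoint])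
  also have "\<dots> = (\<Prod>j\<in>nbrs_with N y k. nbr_lik c m k) * (\<Prod>j\<in>nbrs_with N y k'. nbr_lik c m k')"
    by (intro arg_cong2[where f = "(*)"] prod.cong) (auto simp: nbrs_with_def)
  finally show ?thesis by simp
qed

lemma posterior_gt_half_iff_likelihood_less:
  assumes "{0, 1} = {k, k'}" "k \<noteq> k'" "pr k = pr k'" "pr k > 0"
    and "likelihood c N y k > 0" "likelihood c N y k' > 0"
  shows "posterior pr c N y k > 1/2 \<longleftrightarrow> likelihood c N y k' < likelihood c N y k"
proof -
  have "posterior pr c N y k =
      likelihood c N y k / (likelihood c N y k + likelihood c N y k')"
    unfolding posterior_def assms(1) using assms(2-4)
    by (simp add: distrib_left[symmetric])
  with assms(5,6) show ?thesis
    by (simp only:) (simp add: field_simps)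
qed

lemma power_prod_less_iff_ln:
  fixes s t u v :: real
  assumes "0 < s" "0 < t" "0 < u" "0 < v"
  shows "u ^ a * v ^ b < s ^ a * t ^ b \<longleftrightarrow> b * (ln v - ln t) < a * (ln s - ln u)"
proof -
  have "u ^ a * v ^ b < s ^ a * t ^ b \<longleftrightarrow> ln (u ^ a * v ^ b) < ln (s ^ a * t ^ b)"
    using assms by simp
  also have "\<dots> \<longleftrightarrow> a * ln u + b * ln v < a * ln s + b * ln t"
    using assms by (simp add: ln_mult ln_realpow)
  finally show ?thesis by (simp add: algebra_simps)
qed

theorem mainTheorem1:
  fixes c pr :: "nat \<Rightarrow> real" and k :: nat and N :: "'a set" and y :: "'a \<Rightarrow> nat"
  assumes "k \<in> {0, 1}"
    and "0 < c 0" "c 0 < 1" "0 < c 1" "c 1 < 1"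
    and "pr 0 = pr 1" "pr 0 + pr 1 = 1"
    and "c k > 1 - c (1 - k)"
    and "finite N"
    and "\<forall>j\<in>N. y j \<in> {0, 1}"
  shows "posterior pr c N y k > 1/2 \<longleftrightarrow>
    real (card (nbrs_with N y k)) >
      real (card (nbrs_with N y (1 - k))) *
        ((ln (c (1 - k)) - ln (1 - c k)) / (ln (c k) - ln (1 - c (1 - k))))"
proof -
  define k' where "k' = 1 - k"
  define a where "a = card (nbrs_with N y k)"
  define b where "b = card (nbrs_with N y k')"
  have labels: "{0, 1} = {k, k'}" "k \<noteq> k'" using assms(1) by (auto simp: k'_def)
  have c_bounds: "0 < c k" "c k < 1" "0 < c k'" "c k' < 1" using assms(1-5) by (auto simp: k'_def)
  have priors: "pr k = pr k'" "pr k > 0" using assms(1,6,7) by (auto simp: k'_def)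
  have "\<forall>j\<in>N. y j \<in> {k, k'}" using assms(10) labels(1) by blast
  then have lik: "likelihood c N y m = nbr_lik c m k ^ a * nbr_lik c m k' ^ b" for m
    using likelihood_two_labels[OF assms(9) _ labels(2)] by (simp add: a_def b_def)
  have "posterior pr c N y k > 1/2 \<longleftrightarrow> likelihood c N y k' < likelihood c N y k"
    using posterior_gt_half_iff_likelihood_less[OF labels priors] likelihood_pos c_bounds
    by blast
  also have "\<dots> \<longleftrightarrow> b * (ln (c k') - ln (1 - c k)) < a * (ln (c k) - ln (1 - c k'))"
    using lik labels(2) c_bounds by (simp add: nbr_lik_def power_prod_less_iff_ln)
  also have "\<dots> \<longleftrightarrow> a > b * ((ln (c k') - ln (1 - c k)) / (ln (c k) - ln (1 - c k')))"
    using assms(8) c_bounds by (simp add: k'_def pos_divide_less_eq mult.commute)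
  finally show ?thesis by (simp add: a_def b_def k'_def)
qed

end
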